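(* Fix $n,r,s\in\mathbb Z_{\ge0}$ with $r,s<n$, and $d_1,\dots,d_r\in\mathbb N$ with $\sum_{i=1}^rd_i=s$. Let $\mu$ be a distribution on $\mathbb Z_{\ge0}$, let $(X_i)_{i\ge1}$ be i.i.d. with law $\mu$, and let $N=|\{i\in\{r+1,\dots,n\}:X_i>0\}|$. Let $\vec Z=(Z_1,\dots,Z_n)=(d_1,\dots,d_r,X_{r+1},\dots,X_n)$ and, conditionally on $\vec Z$, let $\Sigma=\Sigma_{\vec Z}$ be its size-biased random re-ordering permutation. Let $(\overline X_i)_{i\in[n]}$ be i.i.d. with the size-biased law of $X_1$. Suppose $\mathbb E[X_1]<\infty$. Then for any $m\in[n-r]$ and any function $f:\mathbb N^m\to\mathbb R$, if $\mathbb P(X_{r+1}+\dots+X_n=n-1-s)>0$, then $$\mathbb E\Big[f(Z_{\Sigma(1)},\dots,Z_{\Sigma(m)})\mathbf 1\{N\ge m\}\mathbf 1\{\tau_r(\Sigma)>m\}\ \Big|\ X_{r+1}+\dots+X_n=n-1-s\Big]=\mathbb E\big[f(\overline X_1,\dots,\overline X_m)\,\Theta^{n,r,s}_\mu(\overline X_1,\dots,\overline X_m)\big].$$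
   Context: Size-biased random re-ordering: for $(k_1,\dots,k_n)\in\mathbb Z_{\ge0}^n$ with $N'$ positive entries, $\Sigma$ is the random permutation of $[n]$ such that $\Sigma(1),\dots,\Sigma(N')$ are the indices of the positive entries, with $\mathbb P(\Sigma=\sigma)=\frac1{(n-N')!}\prod_{i=1}^{N'}\frac{k_{\sigma(i)}}{\sum_{j=i}^{N'}k_{\sigma(j)}}$ for such $\sigma$ (i.e. the positive entries in size-biased order followed by the zero entries in uniform order). For $\sigma$ a permutation of $[n]$: $\tau_r(\sigma)=\min\{j\in[n]:\sigma(j)\in[r]\}$ if $r\in[n]$, and $\tau_0(\sigma)=n+1$. The size-biased law of $X_1$ is $\mathbb P(\overline X=k)=k\mu_k/\mathbb E[X_1]$. For $k_1,\dots,k_m\in\mathbb N$ with $k_1+\dots+k_m\le n-1-s$, $$\Theta^{n,r,s}_\mu(k_1,\dots,k_m)=\frac{\mathbb P\big(X_{m+1}+\dots+X_{n-r}=n-1-s-\sum_{i=1}^mk_i\big)}{\mathbb P\big(X_1+\dots+X_{n-r}=n-1-s\big)}\,(\mathbb E[X_1])^m\prod_{i=1}^m\frac{n-r-i+1}{n-1-\sum_{j=1}^{i-1}k_j},$$ and $\Theta^{n,r,s}_\mu(k_1,\dots,k_m)=0$ otherwise. *)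

theory Defs
  imports "HOL-Probability.Probability" "HOL-Combinatorics.Permutations"
begin

text \<open>Probability that Size-biased random re-ordering of (k 1, ..., k n) equals sigma.
  sigma ranges over permutations of {1..n}; the positive entries come first in
  size-biased order, followed by the zero entries in uniform order.\<close>
definition sb_prob :: "nat \<Rightarrow> (nat \<Rightarrow> nat) \<Rightarrow> (nat \<Rightarrow> nat) \<Rightarrow> real" where
  "sb_prob n k \<sigma> =
     (let P = {i \<in> {1..n}. 0 < k i}; N' = card P in
      if \<sigma> permutes {1..n} \<and> \<sigma> ` {1..N'} = P then
        (1 / fact (n - N')) *
        (\<Prod>i\<in>{1..N'}. real (k (\<sigma> i)) / real (\<Sum>j\<in>{i..N'}. k (\<sigma> j)))
      else 0)"

definition tau :: "nat \<Rightarrow> nat \<Rightarrow> (nat \<Rightarrow> nat) \<Rightarrow> nat" where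
  "tau n r \<sigma> = (if r = 0 then n + 1 else Min {j \<in> {1..n}. \<sigma> j \<in> {1..r}})"

definition Zvec :: "nat \<Rightarrow> (nat \<Rightarrow> nat) \<Rightarrow> (nat \<Rightarrow> nat) \<Rightarrow> nat \<Rightarrow> nat" where
  "Zvec r d x = (\<lambda>i. if i \<le> r then d i else x i)"

definition Npos :: "nat \<Rightarrow> nat \<Rightarrow> (nat \<Rightarrow> nat) \<Rightarrow> nat" where
  "Npos n r x = card {i \<in> {r+1..n}. 0 < x i}"

abbreviation iid_pmf :: "nat set \<Rightarrow> nat pmf \<Rightarrow> (nat \<Rightarrow> nat) pmf" where
  "iid_pmf I \<mu> \<equiv> Pi_pmf I 0 (\<lambda>_. \<mu>)"

definition psum :: "nat pmf \<Rightarrow> nat \<Rightarrow> nat \<Rightarrow> real" where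
  "psum \<mu> j t = measure_pmf.prob (iid_pmf {1..j} \<mu>) {x. (\<Sum>i\<in>{1..j}. x i) = t}"

definition mean :: "nat pmf \<Rightarrow> real" where
  "mean \<mu> = measure_pmf.expectation \<mu> real"

definition sb_weight :: "nat pmf \<Rightarrow> nat \<Rightarrow> real" where
  "sb_weight \<mu> k = real k * pmf \<mu> k / mean \<mu>"

definition Theta :: "nat pmf \<Rightarrow> nat \<Rightarrow> nat \<Rightarrow> nat \<Rightarrow> nat list \<Rightarrow> real" where
  "Theta \<mu> n r s ks =
     (let m = length ks in
      if (\<forall>k\<in>set ks. 1 \<le> k) \<and> sum_list ks \<le> n - 1 - s then
        psum \<mu> (n - r - m) (n - 1 - s - sum_list ks) / psum \<mu> (n - r) (n - 1 - s)
        * mean \<mu> ^ m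
        * (\<Prod>i\<in>{1..m}. (real n - real r - real i + 1)
                           / (real n - 1 - real (sum_list (take (i - 1) ks))))
      else 0)"

end

theory Submission
  imports Defs "HOL-Combinatorics.Multiset_Permutations"
begin

text \<open>
  Fix the values x of X_(r+1), ..., X_n, with sum n - 1 - s. The entries of Z then have total
  weight n - 1, and a size-biased ordering starts with the distinct positive positions
  l_1, ..., l_m with probability prod_i Z(l_i) / (n - 1 - Z(l_1) - ... - Z(l_(i-1))).
  The event tau_r > m says that these positions lie in {r+1..n} (and then N >= m holds
  automatically), so the integrand is a sum, over the distinct lists l of length m in {r+1..n},
  of a function of x_l alone. Conditioned on its total, the i.i.d. vector is exchangeable:
  each of the (n-r)(n-r-1)...(n-r-m+1) lists contributes the same, and x_l = (k_1, ..., k_m)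
  has probability prod_i mu(k_i) P(S_(n-r-m) = n-1-s-sum_i k_i) / P(S_(n-r) = n-1-s).
  Writing k mu(k) = E[X_1] P(Xbar = k) turns this into Theta.
\<close>

definition distinct_lists :: "nat \<Rightarrow> 'a set \<Rightarrow> 'a list set" where
  "distinct_lists m A = {xs. length xs = m \<and> distinct xs \<and> set xs \<subseteq> A}"

lemma finite_distinct_lists: "finite A \<Longrightarrow> finite (distinct_lists m A)"
  unfolding distinct_lists_def
  using finite_lists_length_eq[of A m] by (rule finite_subset[rotated]) auto

lemma distinct_lists_0 [simp]: "distinct_lists 0 A = {[]}"
  by (auto simp: distinct_lists_def)

lemma distinct_lists_Suc:
  "distinct_lists (Suc m) A = (\<Union>a\<in>A. (#) a ` distinct_lists m (A - {a}))"
proof (intro equalityI subsetI)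
  fix xs assume "xs \<in> distinct_lists (Suc m) A"
  then obtain a ys where "xs = a # ys" "a \<in> A" "ys \<in> distinct_lists m (A - {a})"
    by (cases xs) (auto simp: distinct_lists_def)
  then show "xs \<in> (\<Union>a\<in>A. (#) a ` distinct_lists m (A - {a}))" by blast
qed (auto simp: distinct_lists_def)

lemma sum_distinct_lists_Suc:
  assumes "finite A"
  shows "(\<Sum>xs\<in>distinct_lists (Suc m) A. g xs) = (\<Sum>a\<in>A. \<Sum>ys\<in>distinct_lists m (A - {a}). g (a # ys))"
  unfolding distinct_lists_Suc using assms
  by (subst sum.UNION_disjoint) (auto simp: finite_distinct_lists sum.reindex)

lemma distinct_lists_eq_empty:
  assumes "finite A" "card A < m"
  shows "distinct_lists m A = {}"
  using assms by (auto simp: distinct_lists_def) (metis card_mono distinct_card not_le)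

lemma card_distinct_lists:
  assumes "finite A" "m \<le> card A"
  shows "card (distinct_lists m A) = (\<Prod>i<m. card A - i)"
proof -
  have "\<Prod>{card A - m + 1..card A} = (\<Prod>i<m. card A - i)"
    by (rule prod.reindex_bij_witness[of _ "\<lambda>j. card A - j" "\<lambda>i. card A - i"]) (use assms in auto)
  then show ?thesis
    using card_lists_distinct_length_eq[OF assms] by (simp add: distinct_lists_def)
qed

text \<open>The probability that a size-biased ordering of items of total weight W begins with items
  of weights ks.\<close>

definition sb_prefix_prob :: "real \<Rightarrow> nat list \<Rightarrow> real" where
  "sb_prefix_prob W ks = (\<Prod>i<length ks. real (ks ! i) / (W - real (sum_list (take i ks))))"

lemma sb_prefix_prob_Nil [simp]: "sb_prefix_prob W [] = 1"
  by (simp add: sb_prefix_prob_def)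

lemma sb_prefix_prob_Cons:
  "sb_prefix_prob W (k # ks) = real k / W * sb_prefix_prob (W - real k) ks"
  unfolding sb_prefix_prob_def
  by (simp del: prod.lessThan_Suc add: prod.lessThan_Suc_shift diff_diff_eq algebra_simps)

lemma sb_prefix_prob_eq_0: "0 \<in> set ks \<Longrightarrow> sb_prefix_prob W ks = 0"
  unfolding sb_prefix_prob_def by (auto simp: in_set_conv_nth)

lemma sum_permutations_of_set_Cons:
  assumes "finite A" "A \<noteq> {}"
  shows "(\<Sum>xs\<in>permutations_of_set A. g xs) = (\<Sum>a\<in>A. \<Sum>ys\<in>permutations_of_set (A - {a}). g (a # ys))"
  unfolding permutations_of_set_nonempty[OF assms(2)] using assms
  by (subst sum.UNION_disjoint) (auto simp: sum.reindex)

lemma sum_permutations_of_set_sb_prefix_prob: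
  assumes "finite P" "\<forall>i\<in>P. 0 < w i" "m \<le> card P"
  shows "(\<Sum>xs\<in>permutations_of_set P. sb_prefix_prob (real (sum w P)) (map w xs) * h (take m xs))
       = (\<Sum>ys\<in>distinct_lists m P. sb_prefix_prob (real (sum w P)) (map w ys) * h ys)"
  using assms
proof (induction "card P" arbitrary: P m h)
  case 0
  then show ?case by simp
next
  case (Suc k)
  define W where "W = real (sum w P)"
  define tail where "tail a g =
    (\<Sum>ys\<in>permutations_of_set (P - {a}). sb_prefix_prob (W - w a) (map w ys) * g ys)" for a g
  have "finite P" "P \<noteq> {}" "m \<le> Suc k"
    using Suc.prems Suc.hyps by auto
  have IH: "tail a (\<lambda>ys. g (take j ys))
      = (\<Sum>ys\<in>distinct_lists j (P - {a}). sb_prefix_prob (W - w a) (map w ys) * g ys)"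
    if "a \<in> P" "j \<le> k" for a j g
  proof -
    have "W - real (w a) = real (sum w (P - {a}))"
      using that \<open>finite P\<close> by (simp add: W_def sum.remove of_nat_diff)
    then show ?thesis
      unfolding tail_def by (simp only:) (rule Suc.hyps(1); use Suc.hyps Suc.prems that in auto)
  qed
  \<comment> \<open>The first item is a with probability w a / W; the rest is a size-biased ordering of P - {a}.\<close>
  have "(\<Sum>xs\<in>permutations_of_set P. sb_prefix_prob W (map w xs) * h (take m xs))
      = (\<Sum>a\<in>P. real (w a) / W * tail a (\<lambda>ys. h (take m (a # ys))))"
    by (simp add: tail_def sum_permutations_of_set_Cons[OF \<open>finite P\<close> \<open>P \<noteq> {}\<close>]
        sb_prefix_prob_Cons sum_distrib_left mult.assoc)
  also have "\<dots> = (\<Sum>ys\<in>distinct_lists m P. sb_prefix_prob W (map w ys) * h ys)"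
  proof (cases m)
    case 0
    have "W > 0"
      using Suc.prems \<open>P \<noteq> {}\<close> by (simp add: W_def sum_pos)
    then have "(\<Sum>a\<in>P. real (w a) * h [] / W) = h []"
      by (simp add: W_def flip: sum_divide_distrib sum_distrib_right)
    then show ?thesis
      using IH[where j = 0 and g = "\<lambda>_. h []"] 0 by simp
  next
    case (Suc j)
    have "tail a (\<lambda>ys. h (take m (a # ys)))
        = (\<Sum>ys\<in>distinct_lists j (P - {a}). sb_prefix_prob (W - w a) (map w ys) * h (a # ys))"
      if "a \<in> P" for a
      using IH[OF that, where j = j and g = "\<lambda>ys. h (a # ys)"] Suc \<open>m \<le> Suc k\<close> by simp
    then show ?thesis
      using Suc by (simp add: sum_distinct_lists_Suc[OF \<open>finite P\<close>] sb_prefix_prob_Cons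
          sum_distrib_left mult.assoc)
  qed
  finally show ?case by (simp add: W_def)
qed

lemma prod_tail_sum_ratio_eq_sb_prefix_prob:
  "(\<Prod>i\<in>{a..<b}. real (g i) / real (\<Sum>j\<in>{i..<b}. g j))
     = sb_prefix_prob (real (\<Sum>j\<in>{a..<b}. g j)) (map g [a..<b])"
proof (induction "b - a" arbitrary: a)
  case 0
  then show ?case by simp
next
  case (Suc k)
  then have "a < b" by simp
  have "real (\<Sum>j\<in>{a..<b}. g j) - real (g a) = real (\<Sum>j\<in>{Suc a..<b}. g j)"
    using \<open>a < b\<close> by (simp add: sum.atLeast_Suc_lessThan)
  then show ?case
    using Suc \<open>a < b\<close>
    by (simp add: upt_conv_Cons prod.atLeast_Suc_lessThan sb_prefix_prob_Cons)
qed

lemma bij_betw_permutes_permutations_of_set: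
  "bij_betw (\<lambda>\<sigma>. map \<sigma> [1..<n+1]) {\<sigma>. \<sigma> permutes {1..n}} (permutations_of_set {1..n})"
proof -
  let ?f = "\<lambda>\<sigma>. map \<sigma> [1..<n+1]"
  have set_upt: "set [1..<n+1] = {1..n}" by auto
  have inj: "inj_on ?f {\<sigma>. \<sigma> permutes {1..n}}"
  proof (rule inj_onI, rule ext)
    fix \<sigma> \<tau> i
    assume perm: "\<sigma> \<in> {\<sigma>. \<sigma> permutes {1..n}}" "\<tau> \<in> {\<sigma>. \<sigma> permutes {1..n}}"
      and eq: "?f \<sigma> = ?f \<tau>"
    show "\<sigma> i = \<tau> i"
    proof (cases "i \<in> {1..n}")
      case True
      with eq show ?thesis by (simp only: map_eq_conv set_upt)
    next
      case False
      with perm show ?thesis by (simp add: permutes_not_in)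
    qed
  qed
  have "?f \<sigma> \<in> permutations_of_set {1..n}" if "\<sigma> permutes {1..n}" for \<sigma>
    using permutes_image[OF that] permutes_inj_on[OF that]
    by (simp only: permutations_of_set_def mem_Collect_eq set_map distinct_map set_upt distinct_upt)
  then have "?f ` {\<sigma>. \<sigma> permutes {1..n}} \<subseteq> permutations_of_set {1..n}"
    by blast
  moreover have "card (?f ` {\<sigma>. \<sigma> permutes {1..n}}) = card (permutations_of_set {1..n})"
    using card_image[OF inj] card_permutations[of "{1..n}" n] by simp
  ultimately show ?thesis
    using inj by (simp add: bij_betw_def card_subset_eq)
qed

lemma sum_permutations_of_set_prefix:
  assumes "finite U" "P \<subseteq> U"
  shows "(\<Sum>L\<in>permutations_of_set U. if set (take (card P) L) = P then G (take (card P) L) else 0)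
       = fact (card (U - P)) * (\<Sum>\<pi>\<in>permutations_of_set P. G \<pi>)"
proof -
  let ?k = "card P" and ?app = "\<lambda>(\<pi>, \<rho>). \<pi> @ \<rho>"
  let ?S = "permutations_of_set P \<times> permutations_of_set (U - P)"
  have "finite P" using assms finite_subset by blast
  have len: "length \<pi> = ?k" if "\<pi> \<in> permutations_of_set P" for \<pi>
    using that \<open>finite P\<close> by (simp add: length_finite_permutations_of_set)
  have split: "{L \<in> permutations_of_set U. set (take ?k L) = P} = ?app ` ?S"
  proof (intro equalityI subsetI)
    fix L assume "L \<in> {L \<in> permutations_of_set U. set (take ?k L) = P}"
    then have L: "set L = U" "distinct L" "set (take ?k L) = P"
      by (auto simp: permutations_of_set_def)
    have "distinct (take ?k L @ drop ?k L)" "set (take ?k L) \<union> set (drop ?k L) = U"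
      using L(1,2) by (simp_all flip: set_append)
    then have "set (drop ?k L) = U - P"
      using L(3) by (auto simp del: append_take_drop_id)
    with L have "(take ?k L, drop ?k L) \<in> ?S"
      by (auto simp: permutations_of_set_def)
    then show "L \<in> ?app ` ?S"
      by (intro image_eqI[where x = "(take ?k L, drop ?k L)"]) auto
  next
    fix L assume "L \<in> ?app ` ?S"
    then obtain \<pi> \<rho> where "L = \<pi> @ \<rho>" "\<pi> \<in> permutations_of_set P" "\<rho> \<in> permutations_of_set (U - P)"
      by auto
    then show "L \<in> {L \<in> permutations_of_set U. set (take ?k L) = P}"
      using assms(2) len by (auto simp: permutations_of_set_def)
  qed
  have "inj_on ?app ?S"
    by (rule inj_onI) (auto simp: len append_eq_append_conv)
  then have "(\<Sum>L\<in>permutations_of_set U. if set (take ?k L) = P then G (take ?k L) else 0)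
      = (\<Sum>(\<pi>, \<rho>)\<in>?S. G \<pi>)"
    by (simp add: sum.inter_filter[symmetric] split sum.reindex case_prod_unfold)
      (rule sum.cong, auto simp: len)
  also have "\<dots> = fact (card (U - P)) * (\<Sum>\<pi>\<in>permutations_of_set P. G \<pi>)"
    using assms by (simp add: sum.cartesian_product[symmetric] sum_distrib_left)
  finally show ?thesis .
qed

lemma sb_prob_eq_sb_prefix_prob:
  assumes P: "P = {i \<in> {1..n}. 0 < w i}" and "\<sigma> permutes {1..n}"
  shows "sb_prob n w \<sigma> = (if set (take (card P) (map \<sigma> [1..<n+1])) = P
      then sb_prefix_prob (real (sum w P)) (map w (take (card P) (map \<sigma> [1..<n+1])))
           / fact (n - card P)
      else 0)"
proof -
  define N where "N = card P"
  have "P \<subseteq> {1..n}" using P by auto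
  then have "N \<le> n"
    using card_mono[of "{1..n}" P] by (simp add: N_def)
  then have take_N: "take N (map \<sigma> [1..<n+1]) = map \<sigma> [1..<N+1]"
    by (simp add: take_map del: upt_Suc)
  have set_N: "set (map \<sigma> [1..<N+1]) = \<sigma> ` {1..N}"
    by (simp add: atLeastLessThanSuc_atLeastAtMost del: upt_Suc)
  have "(\<Prod>i\<in>{1..N}. real (w (\<sigma> i)) / real (\<Sum>j\<in>{i..N}. w (\<sigma> j)))
      = sb_prefix_prob (real (sum w P)) (map w (map \<sigma> [1..<N+1]))"
    if "\<sigma> ` {1..N} = P"
  proof -
    have "inj_on \<sigma> {1..N}"
      by (rule permutes_inj_on[OF assms(2)])
    then have "(\<Sum>j\<in>{1..N}. w (\<sigma> j)) = sum w P"
      using sum.reindex[OF _, of \<sigma> "{1..N}" w] that by (simp add: comp_def)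
    then show ?thesis
      using prod_tail_sum_ratio_eq_sb_prefix_prob[where g = "\<lambda>j. w (\<sigma> j)" and a = 1 and b = "N+1"]
      by (simp add: atLeastLessThanSuc_atLeastAtMost comp_def del: upt_Suc of_nat_sum)
  qed
  then show ?thesis
    unfolding sb_prob_def Let_def P[symmetric] N_def[symmetric] take_N set_N
    using assms(2) by auto
qed

lemma sum_sb_prob_prefix:
  assumes P: "P = {i \<in> {1..n}. 0 < w i}" and "m \<le> card P"
  shows "(\<Sum>\<sigma> | \<sigma> permutes {1..n}. sb_prob n w \<sigma> * h (map \<sigma> [1..<m+1]))
       = (\<Sum>ys\<in>distinct_lists m P. sb_prefix_prob (real (sum w P)) (map w ys) * h ys)"
proof -
  define N where "N = card P"
  define G where "G \<pi> = sb_prefix_prob (real (sum w P)) (map w \<pi>) * h (take m \<pi>) / fact (n - N)"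
    for \<pi>
  have "P \<subseteq> {1..n}" using P by auto
  define F where "F L = (if set (take N L) = P then G (take N L) else 0)" for L
  have summand: "sb_prob n w \<sigma> * h (map \<sigma> [1..<m+1]) = F (map \<sigma> [1..<n+1])"
    if "\<sigma> permutes {1..n}" for \<sigma>
    using sb_prob_eq_sb_prefix_prob[OF P that] assms(2) card_mono[OF _ \<open>P \<subseteq> {1..n}\<close>]
    by (simp add: F_def G_def N_def take_map min_def del: upt_Suc)
  have "(\<Sum>\<sigma> | \<sigma> permutes {1..n}. sb_prob n w \<sigma> * h (map \<sigma> [1..<m+1]))
      = (\<Sum>\<sigma> | \<sigma> permutes {1..n}. F (map \<sigma> [1..<n+1]))"
    by (intro sum.cong refl summand) simp
  also have "\<dots> = (\<Sum>L\<in>permutations_of_set {1..n}. F L)"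
    by (rule sum.reindex_bij_betw[OF bij_betw_permutes_permutations_of_set])
  also have "\<dots> = fact (n - N) * (\<Sum>\<pi>\<in>permutations_of_set P. G \<pi>)"
  proof -
    have "card ({1..n} - P) = n - N"
      using \<open>P \<subseteq> {1..n}\<close> by (simp add: N_def card_Diff_subset finite_subset)
    then show ?thesis
      unfolding F_def N_def using sum_permutations_of_set_prefix[OF _ \<open>P \<subseteq> {1..n}\<close>, of G] by simp
  qed
  also have "\<dots> = (\<Sum>\<pi>\<in>permutations_of_set P.
      sb_prefix_prob (real (sum w P)) (map w \<pi>) * h (take m \<pi>))"
    by (simp add: G_def sum_divide_distrib[symmetric])
  also have "\<dots> = (\<Sum>ys\<in>distinct_lists m P. sb_prefix_prob (real (sum w P)) (map w ys) * h ys)"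
    using P assms(2) by (intro sum_permutations_of_set_sb_prefix_prob) auto
  finally show ?thesis .
qed

lemma tau_gt_iff:
  assumes "\<sigma> permutes {1..n}" "m \<le> n" "r \<le> n"
  shows "m < tau n r \<sigma> \<longleftrightarrow> \<sigma> ` {1..m} \<subseteq> {r+1..n}"
proof -
  have in_range: "\<sigma> j \<in> {1..n}" if "j \<in> {1..m}" for j
    using that assms(2) permutes_in_image[OF assms(1)] by auto
  show ?thesis
  proof (cases "r = 0")
    case True
    then show ?thesis using in_range assms(2) by (auto simp: tau_def)
  next
    case False
    define S where "S = {j \<in> {1..n}. \<sigma> j \<in> {1..r}}"
    have "1 \<in> \<sigma> ` {1..n}"
      using permutes_image[OF assms(1)] False assms(3) by auto
    then have "S \<noteq> {}" using False by (auto simp: S_def)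
    moreover have "finite S" "tau n r \<sigma> = Min S"
      using False by (simp_all add: S_def tau_def)
    ultimately have "m < tau n r \<sigma> \<longleftrightarrow> (\<forall>j\<in>S. m < j)"
      by simp
    also have "\<dots> \<longleftrightarrow> (\<forall>j\<in>{1..m}. \<sigma> j \<notin> {1..r})"
      using assms(2) by (force simp: S_def)
    also have "\<dots> \<longleftrightarrow> \<sigma> ` {1..m} \<subseteq> {r+1..n}"
      using in_range by fastforce
    finally show ?thesis .
  qed
qed

lemma sum_sb_prob_prefix_subset:
  assumes P: "P = {i \<in> {1..n}. 0 < w i}" and "m \<le> card (P \<inter> J)"
  shows "(\<Sum>\<sigma> | \<sigma> permutes {1..n}. sb_prob n w \<sigma> * g (map w (map \<sigma> [1..<m+1]))
            * (if \<sigma> ` {1..m} \<subseteq> J then 1 else 0))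
       = (\<Sum>l\<in>distinct_lists m (P \<inter> J). sb_prefix_prob (real (sum w P)) (map w l) * g (map w l))"
proof -
  define h where "h l = g (map w l) * (if set l \<subseteq> J then 1 else 0)" for l
  have "finite P" using P by simp
  then have "m \<le> card P"
    using assms(2) card_mono[of P "P \<inter> J"] by simp
  have "set (map \<sigma> [1..<m+1]) = \<sigma> ` {1..m}" for \<sigma> :: "nat \<Rightarrow> nat"
    by (simp add: atLeastLessThanSuc_atLeastAtMost del: upt_Suc)
  then have "(\<Sum>\<sigma> | \<sigma> permutes {1..n}. sb_prob n w \<sigma> * g (map w (map \<sigma> [1..<m+1]))
      * (if \<sigma> ` {1..m} \<subseteq> J then 1 else 0))
      = (\<Sum>\<sigma> | \<sigma> permutes {1..n}. sb_prob n w \<sigma> * h (map \<sigma> [1..<m+1]))"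
    by (simp add: h_def mult.assoc del: upt_Suc)
  also have "\<dots> = (\<Sum>l\<in>distinct_lists m P. sb_prefix_prob (real (sum w P)) (map w l) * h l)"
    by (rule sum_sb_prob_prefix[OF P \<open>m \<le> card P\<close>])
  also have "\<dots> = (\<Sum>l\<in>distinct_lists m (P \<inter> J).
      sb_prefix_prob (real (sum w P)) (map w l) * g (map w l))"
    by (rule sum.mono_neutral_cong_right[OF finite_distinct_lists[OF \<open>finite P\<close>]])
      (auto simp: h_def distinct_lists_def)
  finally show ?thesis .
qed

lemma sum_distinct_lists_sb_prefix_prob_pos:
  assumes "finite A"
  shows "(\<Sum>l\<in>distinct_lists m A. sb_prefix_prob W (map x l) * g l)
       = (\<Sum>l\<in>distinct_lists m {i \<in> A. 0 < x i}. sb_prefix_prob W (map x l) * g l)"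
proof (rule sum.mono_neutral_right[OF finite_distinct_lists[OF assms]])
  show "\<forall>l\<in>distinct_lists m A - distinct_lists m {i \<in> A. 0 < x i}.
      sb_prefix_prob W (map x l) * g l = 0"
    by (auto simp: distinct_lists_def image_iff intro!: sb_prefix_prob_eq_0)
qed (auto simp: distinct_lists_def)

lemma sum_Zvec:
  assumes "r \<le> n"
  shows "(\<Sum>i\<in>{1..n}. Zvec r d x i) = (\<Sum>i\<in>{1..r}. d i) + (\<Sum>i\<in>{r+1..n}. x i)"
proof -
  have "{1..n} = {1..r} \<union> {r+1..n}"
    using assms by auto
  then show ?thesis
    by (simp add: sum.union_disjoint Zvec_def)
qed

lemma sum_sb_prob_Zvec:
  fixes d x :: "nat \<Rightarrow> nat"
  assumes "r < n" "m \<le> n - r" and total: "(\<Sum>i\<in>{1..r}. d i) + (\<Sum>i\<in>{r+1..n}. x i) = n - 1"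
  shows "(\<Sum>\<sigma> | \<sigma> permutes {1..n}.
            sb_prob n (Zvec r d x) \<sigma> * f (map (\<lambda>i. Zvec r d x (\<sigma> i)) [1..<m+1])
            * (if m \<le> Npos n r x then 1 else 0) * (if m < tau n r \<sigma> then 1 else 0))
       = (\<Sum>l\<in>distinct_lists m {r+1..n}. sb_prefix_prob (real (n - 1)) (map x l) * f (map x l))"
    (is "?lhs = ?rhs")
proof -
  define I where "I = {r+1..n}"
  define Z where "Z = Zvec r d x"
  define P where "P = {i \<in> {1..n}. 0 < Z i}"
  have Z_I: "Z i = x i" if "i \<in> I" for i
    using that by (simp add: Z_def Zvec_def I_def)
  have map_Z: "map Z l = map x l" if "set l \<subseteq> I" for l
    using that Z_I by auto
  have Q: "{i \<in> I. 0 < x i} = P \<inter> I"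
    using Z_I by (auto simp: P_def I_def)
  have rhs: "?rhs
      = (\<Sum>l\<in>distinct_lists m (P \<inter> I). sb_prefix_prob (real (n - 1)) (map x l) * f (map x l))"
    unfolding Q[symmetric] unfolding I_def by (rule sum_distinct_lists_sb_prefix_prob_pos) simp
  show ?thesis
  proof (cases "m \<le> card (P \<inter> I)")
    case True
    have "sum Z P = sum Z {1..n}"
      by (rule sum.mono_neutral_left) (auto simp: P_def)
    then have "sum Z P = n - 1"
      using sum_Zvec[of r n d x] assms(1) total by (simp add: Z_def)
    have "?lhs = (\<Sum>\<sigma> | \<sigma> permutes {1..n}. sb_prob n Z \<sigma> * f (map Z (map \<sigma> [1..<m+1]))
        * (if \<sigma> ` {1..m} \<subseteq> I then 1 else 0))"
      using True Q tau_gt_iff[of _ n m r] assms(1,2)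
      by (intro sum.cong refl) (simp add: Z_def I_def Npos_def comp_def del: upt_Suc)
    also have "\<dots>
        = (\<Sum>l\<in>distinct_lists m (P \<inter> I). sb_prefix_prob (real (n - 1)) (map Z l) * f (map Z l))"
      using sum_sb_prob_prefix_subset[OF P_def True] \<open>sum Z P = n - 1\<close> by simp
    also have "\<dots> = ?rhs"
      unfolding rhs by (intro sum.cong refl) (auto simp: distinct_lists_def map_Z)
    finally show ?thesis .
  next
    case False
    then have "?lhs = 0"
      using Q by (simp add: Npos_def I_def)
    then show ?thesis
      using rhs False distinct_lists_eq_empty[of "P \<inter> I"] by (simp add: P_def)
  qed
qed

primrec sum_iid_pmf :: "nat pmf \<Rightarrow> nat \<Rightarrow> nat pmf" where
  "sum_iid_pmf \<mu> 0 = return_pmf 0"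
| "sum_iid_pmf \<mu> (Suc k) = map_pmf (\<lambda>(y, t). y + t) (pair_pmf \<mu> (sum_iid_pmf \<mu> k))"

lemma map_pmf_sum_Pi_pmf:
  assumes "finite J"
  shows "map_pmf (\<lambda>x. \<Sum>i\<in>J. x i) (Pi_pmf J 0 (\<lambda>_. \<mu>)) = sum_iid_pmf \<mu> (card J)"
  using assms
proof (induction J rule: finite_induct)
  case empty
  then show ?case by simp
next
  case (insert a J)
  have split_sum: "(\<lambda>x. \<Sum>i\<in>insert a J. x i) \<circ> (\<lambda>(y :: nat, x). x(a := y))
      = (\<lambda>(y, t). y + t) \<circ> apsnd (\<lambda>x. \<Sum>i\<in>J. x i)"
  proof -
    have upd: "sum (x(a := y)) J = sum x J" for x :: "_ \<Rightarrow> nat" and y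
      using insert.hyps by (intro sum.cong) auto
    show ?thesis
      using insert.hyps by (auto simp: fun_eq_iff upd fun_upd_same simp del: fun_upd_apply)
  qed
  have "map_pmf (\<lambda>x. \<Sum>i\<in>insert a J. x i) (Pi_pmf (insert a J) 0 (\<lambda>_. \<mu>))
      = map_pmf ((\<lambda>x. \<Sum>i\<in>insert a J. x i) \<circ> (\<lambda>(y, x). x(a := y))) (pair_pmf \<mu> (Pi_pmf J 0 (\<lambda>_. \<mu>)))"
    using insert.hyps by (simp add: Pi_pmf_insert map_pmf_comp comp_def)
  also have "\<dots> = map_pmf ((\<lambda>(y, t). y + t) \<circ> apsnd (\<lambda>x. \<Sum>i\<in>J. x i))
      (pair_pmf \<mu> (Pi_pmf J 0 (\<lambda>_. \<mu>)))"
    by (simp only: split_sum)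
  also have "\<dots> = map_pmf (\<lambda>(y, t). y + t)
      (pair_pmf \<mu> (map_pmf (\<lambda>x. \<Sum>i\<in>J. x i) (Pi_pmf J 0 (\<lambda>_. \<mu>))))"
    by (simp add: pair_map_pmf2 map_pmf_comp comp_def)
  finally show ?case
    using insert by simp
qed

lemma prob_Pi_pmf_sum_eq_psum:
  assumes "finite J"
  shows "measure_pmf.prob (iid_pmf J \<mu>) {x. (\<Sum>i\<in>J. x i) = t} = psum \<mu> (card J) t"
proof -
  have "measure_pmf.prob (iid_pmf J \<mu>) {x. (\<Sum>i\<in>J. x i) = t} = pmf (sum_iid_pmf \<mu> (card J)) t"
    if "finite J" for J :: "nat set"
    unfolding map_pmf_sum_Pi_pmf[OF that, symmetric] pmf_map by (simp add: vimage_def)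
  from this[OF assms] this[of "{1..card J}"] show ?thesis
    by (simp add: psum_def)
qed

lemma pmf_map_Pi_pmf_prefix_sum:
  assumes "finite I" "distinct l" "set l \<subseteq> I" "length ks = length l"
  shows "pmf (map_pmf (\<lambda>x. (map x l, \<Sum>i\<in>I. x i)) (iid_pmf I \<mu>)) (ks, sum_list ks + t)
       = (\<Prod>k\<leftarrow>ks. pmf \<mu> k) * psum \<mu> (card I - length l) t"
  using assms
proof (induction l arbitrary: I ks)
  case Nil
  then show ?case
    using prob_Pi_pmf_sum_eq_psum[OF Nil(1)] by (simp add: pmf_map vimage_def)
next
  case (Cons a l)
  obtain k ks' where ks: "ks = k # ks'"
    using Cons.prems(4) by (cases ks) auto
  define I' where "I' = I - {a}"
  have I': "I = insert a I'" "a \<notin> I'" "finite I'" "set l \<subseteq> I'"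
    using Cons.prems by (auto simp: I'_def)
  let ?cons = "\<lambda>(y :: nat, ys, s). (y # ys, y + s)"
  have "map (x(a := y)) l = map x l" "sum (x(a := y)) I' = sum x I'" for x :: "nat \<Rightarrow> nat" and y
    using I' Cons.prems(2) by (auto intro!: map_cong sum.cong)
  then have split: "(\<lambda>x. (map x (a # l), \<Sum>i\<in>I. x i)) \<circ> (\<lambda>(y, x). x(a := y))
      = ?cons \<circ> apsnd (\<lambda>x. (map x l, \<Sum>i\<in>I'. x i))"
    using I' by (auto simp: fun_eq_iff)
  have "map_pmf (\<lambda>x. (map x (a # l), \<Sum>i\<in>I. x i)) (iid_pmf I \<mu>)
      = map_pmf ((\<lambda>x. (map x (a # l), \<Sum>i\<in>I. x i)) \<circ> (\<lambda>(y, x). x(a := y)))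
          (pair_pmf \<mu> (iid_pmf I' \<mu>))"
    by (simp add: I'(1) Pi_pmf_insert[OF I'(3,2)] map_pmf_comp comp_def)
  also have "\<dots> = map_pmf ?cons (pair_pmf \<mu> (map_pmf (\<lambda>x. (map x l, \<Sum>i\<in>I'. x i)) (iid_pmf I' \<mu>)))"
    unfolding split by (simp add: pair_map_pmf2 map_pmf_comp comp_def)
  finally have law: "map_pmf (\<lambda>x. (map x (a # l), \<Sum>i\<in>I. x i)) (iid_pmf I \<mu>)
      = map_pmf ?cons (pair_pmf \<mu> (map_pmf (\<lambda>x. (map x l, \<Sum>i\<in>I'. x i)) (iid_pmf I' \<mu>)))" .
  have "inj ?cons"
    by (auto simp: inj_def)
  then have "pmf (map_pmf (\<lambda>x. (map x (a # l), \<Sum>i\<in>I. x i)) (iid_pmf I \<mu>)) (ks, sum_list ks + t)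
      = pmf \<mu> k * pmf (map_pmf (\<lambda>x. (map x l, \<Sum>i\<in>I'. x i)) (iid_pmf I' \<mu>)) (ks', sum_list ks' + t)"
    unfolding law using pmf_map_inj'[of ?cons _ "(k, ks', sum_list ks' + t)"]
    by (simp add: ks pmf_pair add.assoc)
  also have "\<dots> = (\<Prod>k\<leftarrow>ks. pmf \<mu> k) * psum \<mu> (card I - length (a # l)) t"
    using Cons.IH[of I' ks'] I' Cons.prems by (simp add: ks)
  finally show ?case .
qed

lemma measure_cond_pmf:
  assumes "set_pmf p \<inter> A \<noteq> {}"
  shows "measure_pmf.prob (cond_pmf p A) X = measure_pmf.prob p (A \<inter> X) / measure_pmf.prob p A"
  using emeasure_measure_pmf_not_zero[OF assms]
  by (simp add: cond_pmf.rep_eq[OF assms] measure_uniform_measure measure_pmf.emeasure_finite)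

lemma finite_lists_length_sum_list_le: "finite {ks :: nat list. length ks = m \<and> sum_list ks \<le> T}"
proof (rule finite_subset)
  show "{ks :: nat list. length ks = m \<and> sum_list ks \<le> T} \<subseteq> {ks. set ks \<subseteq> {..T} \<and> length ks = m}"
    by (auto dest: member_le_sum_list)
qed (simp add: finite_lists_length_eq)

lemma finite_set_pmf_cond_Pi_pmf_sum:
  assumes "finite I" "set_pmf (iid_pmf I \<mu>) \<inter> {x. (\<Sum>i\<in>I. x i) = T} \<noteq> {}"
  shows "finite (set_pmf (cond_pmf (iid_pmf I \<mu>) {x. (\<Sum>i\<in>I. x i) = T}))"
proof (rule finite_subset)
  show "set_pmf (cond_pmf (iid_pmf I \<mu>) {x. (\<Sum>i\<in>I. x i) = T}) \<subseteq> PiE_dflt I 0 (\<lambda>_. {..T})"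
    using set_Pi_pmf_subset[OF assms(1), of 0 "\<lambda>_. \<mu>"] member_le_sum[OF _ _ assms(1)]
    by (fastforce simp: set_cond_pmf[OF assms(2)] PiE_dflt_def)
qed (use assms(1) in auto)

lemma expectation_cond_Pi_pmf_sum_prefix:
  fixes \<phi> :: "nat list \<Rightarrow> real"
  assumes "finite I" "distinct l" "set l \<subseteq> I"
    and pos: "measure_pmf.prob (iid_pmf I \<mu>) {x. (\<Sum>i\<in>I. x i) = T} > 0"
  shows "measure_pmf.expectation (cond_pmf (iid_pmf I \<mu>) {x. (\<Sum>i\<in>I. x i) = T}) (\<lambda>x. \<phi> (map x l))
       = (\<Sum>ks | length ks = length l \<and> sum_list ks \<le> T.
            \<phi> ks * (\<Prod>k\<leftarrow>ks. pmf \<mu> k) * psum \<mu> (card I - length l) (T - sum_list ks))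
         / psum \<mu> (card I) T"
proof -
  define p where "p = iid_pmf I \<mu>"
  define A where "A = {x :: nat \<Rightarrow> nat. (\<Sum>i\<in>I. x i) = T}"
  define K where "K = {ks. length ks = length l \<and> sum_list ks \<le> T}"
  have "set_pmf p \<inter> A \<noteq> {}"
    using pos measure_pmf_zero_iff[of p A] by (auto simp: p_def A_def)
  have "finite K"
    by (simp add: K_def finite_lists_length_sum_list_le)
  have prefix_le: "sum_list (map x l) \<le> (\<Sum>i\<in>I. x i)" for x :: "nat \<Rightarrow> nat"
    using assms(1-3) by (simp add: sum_list_distinct_conv_sum_set sum_mono2)
  have pmf_prefix: "pmf (map_pmf (\<lambda>x. map x l) (cond_pmf p A)) ks
      = (\<Prod>k\<leftarrow>ks. pmf \<mu> k) * psum \<mu> (card I - length l) (T - sum_list ks) / psum \<mu> (card I) T"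
    if "ks \<in> K" for ks
  proof -
    have "A \<inter> (\<lambda>x. map x l) -` {ks}
        = (\<lambda>x. (map x l, \<Sum>i\<in>I. x i)) -` {(ks, sum_list ks + (T - sum_list ks))}"
      using that by (auto simp: A_def K_def)
    then have "pmf (map_pmf (\<lambda>x. map x l) (cond_pmf p A)) ks
        = pmf (map_pmf (\<lambda>x. (map x l, \<Sum>i\<in>I. x i)) p) (ks, sum_list ks + (T - sum_list ks))
          / measure_pmf.prob p A"
      by (simp only: pmf_map measure_cond_pmf[OF \<open>set_pmf p \<inter> A \<noteq> {}\<close>])
    then show ?thesis
      using that pmf_map_Pi_pmf_prefix_sum[OF assms(1-3), of ks \<mu> "T - sum_list ks"]
        prob_Pi_pmf_sum_eq_psum[OF assms(1)]
      by (simp add: p_def A_def K_def)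
  qed
  have "measure_pmf.expectation (cond_pmf p A) (\<lambda>x. \<phi> (map x l))
      = measure_pmf.expectation (map_pmf (\<lambda>x. map x l) (cond_pmf p A)) \<phi>"
    by simp
  also have "\<dots> = (\<Sum>ks\<in>K. \<phi> ks * pmf (map_pmf (\<lambda>x. map x l) (cond_pmf p A)) ks)"
    by (rule integral_measure_pmf_real[OF \<open>finite K\<close>])
      (use \<open>set_pmf p \<inter> A \<noteq> {}\<close> prefix_le in \<open>auto simp: K_def A_def\<close>)
  also have "\<dots> = (\<Sum>ks\<in>K. \<phi> ks * (\<Prod>k\<leftarrow>ks. pmf \<mu> k) * psum \<mu> (card I - length l) (T - sum_list ks))
      / psum \<mu> (card I) T"
    unfolding sum_divide_distrib by (intro sum.cong refl) (simp add: pmf_prefix)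
  finally show ?thesis
    by (simp only: p_def A_def K_def)
qed

lemma expectation_cond_Pi_pmf_sum_distinct_lists:
  fixes \<phi> :: "nat list \<Rightarrow> real"
  assumes "finite I" "m \<le> card I"
    and pos: "measure_pmf.prob (iid_pmf I \<mu>) {x. (\<Sum>i\<in>I. x i) = T} > 0"
  shows "measure_pmf.expectation (cond_pmf (iid_pmf I \<mu>) {x. (\<Sum>i\<in>I. x i) = T})
           (\<lambda>x. \<Sum>l\<in>distinct_lists m I. \<phi> (map x l))
       = real (\<Prod>i<m. card I - i) * (\<Sum>ks | length ks = m \<and> sum_list ks \<le> T.
            \<phi> ks * (\<Prod>k\<leftarrow>ks. pmf \<mu> k) * psum \<mu> (card I - m) (T - sum_list ks))
         / psum \<mu> (card I) T"
proof -
  let ?q = "cond_pmf (iid_pmf I \<mu>) {x. (\<Sum>i\<in>I. x i) = T}"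
  have "set_pmf (iid_pmf I \<mu>) \<inter> {x. (\<Sum>i\<in>I. x i) = T} \<noteq> {}"
    using pos by (auto simp: measure_pmf_zero_iff[symmetric])
  then have "integrable ?q g" for g :: "_ \<Rightarrow> real"
    by (intro integrable_measure_pmf_finite finite_set_pmf_cond_Pi_pmf_sum assms(1))
  then have "measure_pmf.expectation ?q (\<lambda>x. \<Sum>l\<in>distinct_lists m I. \<phi> (map x l))
      = (\<Sum>l\<in>distinct_lists m I. measure_pmf.expectation ?q (\<lambda>x. \<phi> (map x l)))"
    by (intro Bochner_Integration.integral_sum)
  also have "\<dots> = (\<Sum>l\<in>distinct_lists m I. (\<Sum>ks | length ks = m \<and> sum_list ks \<le> T.
      \<phi> ks * (\<Prod>k\<leftarrow>ks. pmf \<mu> k) * psum \<mu> (card I - m) (T - sum_list ks)) / psum \<mu> (card I) T)"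
    using assms(1) pos
    by (intro sum.cong refl) (auto simp: distinct_lists_def expectation_cond_Pi_pmf_sum_prefix)
  finally show ?thesis
    using assms(1,2) by (simp add: card_distinct_lists)
qed

lemma mean_mult_sb_weight:
  assumes "integrable (measure_pmf \<mu>) real"
  shows "mean \<mu> * sb_weight \<mu> k = real k * pmf \<mu> k"
proof (cases "mean \<mu> = 0")
  case True
  then have "AE x in measure_pmf \<mu>. real x = 0"
    using assms integral_nonneg_eq_0_iff_AE[of "measure_pmf \<mu>" real] by (simp add: mean_def)
  then have "k = 0 \<or> pmf \<mu> k = 0"
    by (auto simp: AE_measure_pmf_iff set_pmf_eq)
  then show ?thesis
    using True by (auto simp: sb_weight_def)
next
  case False
  then show ?thesis by (simp add: sb_weight_def)
qed

lemma prod_list_map_conv_prod_nth: "(\<Prod>k\<leftarrow>ks. g k) = (\<Prod>i<length ks. g (ks ! i))"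
  by (induction ks) (simp_all add: prod.lessThan_Suc_shift del: prod.lessThan_Suc)

lemma sb_weight_mult_Theta:
  assumes "integrable (measure_pmf \<mu>) real" "r < n" "m \<le> n - r" "length ks = m"
    and "sum_list ks \<le> n - 1 - s"
  shows "(\<Prod>k\<leftarrow>ks. sb_weight \<mu> k) * Theta \<mu> n r s ks
       = real (\<Prod>i<m. n - r - i) * sb_prefix_prob (real (n - 1)) ks * (\<Prod>k\<leftarrow>ks. pmf \<mu> k)
         * psum \<mu> (n - r - m) (n - 1 - s - sum_list ks) / psum \<mu> (n - r) (n - 1 - s)"
proof (cases "0 \<in> set ks")
  case True
  then have "\<not> (\<forall>k\<in>set ks. 1 \<le> k)" by force
  then have "Theta \<mu> n r s ks = 0"
    unfolding Theta_def Let_def by (intro if_not_P) blast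
  then show ?thesis
    using True by (simp add: sb_prefix_prob_eq_0)
next
  case False
  define ratio where
    "ratio = psum \<mu> (n - r - m) (n - 1 - s - sum_list ks) / psum \<mu> (n - r) (n - 1 - s)"
  define c where "c i = real (n - r - i)" for i
  define D where "D i = real (n - 1) - real (sum_list (take i ks))" for i
  have "(\<forall>k\<in>set ks. 1 \<le> k)"
    using False by (auto simp: Suc_le_eq intro: gr0I)
  moreover have "(\<Prod>i\<in>{1..m}.
      (real n - real r - real i + 1) / (real n - 1 - real (sum_list (take (i - 1) ks))))
      = (\<Prod>i<m. c i / D i)"
    using assms(2,3) by (simp add: prod.atLeast1_atMost_eq c_def D_def of_nat_diff algebra_simps)
  ultimately have Theta: "Theta \<mu> n r s ks = ratio * mean \<mu> ^ m * (\<Prod>i<m. c i / D i)"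
    using assms(4,5) by (simp add: Theta_def Let_def ratio_def)
  have "(\<Prod>k\<leftarrow>ks. sb_weight \<mu> k) * mean \<mu> ^ m = (\<Prod>i<m. mean \<mu> * sb_weight \<mu> (ks ! i))"
    using assms(4) by (simp add: prod_list_map_conv_prod_nth prod.distrib mult.commute)
  also have "\<dots> = (\<Prod>i<m. real (ks ! i) * pmf \<mu> (ks ! i))"
    by (simp add: mean_mult_sb_weight[OF assms(1)])
  finally have weights: "(\<Prod>k\<leftarrow>ks. sb_weight \<mu> k) * mean \<mu> ^ m
      = (\<Prod>i<m. real (ks ! i) * pmf \<mu> (ks ! i))" .
  have "real (\<Prod>i<m. n - r - i) = (\<Prod>i<m. c i)"
    by (simp add: c_def)
  moreover have "sb_prefix_prob (real (n - 1)) ks = (\<Prod>i<m. real (ks ! i) / D i)"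
    using assms(4) by (simp add: sb_prefix_prob_def D_def)
  moreover have "(\<Prod>k\<leftarrow>ks. pmf \<mu> k) = (\<Prod>i<m. pmf \<mu> (ks ! i))"
    using assms(4) by (simp add: prod_list_map_conv_prod_nth)
  ultimately have "real (\<Prod>i<m. n - r - i) * sb_prefix_prob (real (n - 1)) ks * (\<Prod>k\<leftarrow>ks. pmf \<mu> k)
      = (\<Prod>i<m. c i * (real (ks ! i) / D i) * pmf \<mu> (ks ! i))"
    by (simp only: prod.distrib)
  also have "\<dots> = (\<Prod>i<m. real (ks ! i) * pmf \<mu> (ks ! i)) * (\<Prod>i<m. c i / D i)"
    unfolding prod.distrib[symmetric] by (rule prod.cong) simp_all
  finally show ?thesis
    by (simp add: Theta weights ratio_def flip: mult.assoc)
qed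

lemma infsum_sb_weight_Theta:
  fixes f :: "nat list \<Rightarrow> real"
  assumes "integrable (measure_pmf \<mu>) real" "r < n" "m \<le> n - r"
  shows "infsum (\<lambda>ks. (\<Prod>k\<leftarrow>ks. sb_weight \<mu> k) * f ks * Theta \<mu> n r s ks) {ks. length ks = m}
       = real (\<Prod>i<m. n - r - i) * (\<Sum>ks | length ks = m \<and> sum_list ks \<le> n - 1 - s.
            sb_prefix_prob (real (n - 1)) ks * f ks * (\<Prod>k\<leftarrow>ks. pmf \<mu> k)
            * psum \<mu> (n - r - m) (n - 1 - s - sum_list ks))
         / psum \<mu> (n - r) (n - 1 - s)"
proof -
  let ?K = "{ks. length ks = m \<and> sum_list ks \<le> n - 1 - s}"
  let ?F = "\<lambda>ks. (\<Prod>k\<leftarrow>ks. sb_weight \<mu> k) * f ks * Theta \<mu> n r s ks"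
  have "Theta \<mu> n r s ks = 0" if "\<not> sum_list ks \<le> n - 1 - s" for ks
    unfolding Theta_def Let_def by (intro if_not_P) (use that in blast)
  then have "infsum ?F {ks. length ks = m} = (\<Sum>ks\<in>?K. ?F ks)"
    by (subst infsum_cong_neutral[where T = ?K]) (auto simp: finite_lists_length_sum_list_le)
  also have "\<dots> = (\<Sum>ks\<in>?K. real (\<Prod>i<m. n - r - i) * (sb_prefix_prob (real (n - 1)) ks * f ks
      * (\<Prod>k\<leftarrow>ks. pmf \<mu> k) * psum \<mu> (n - r - m) (n - 1 - s - sum_list ks))
      / psum \<mu> (n - r) (n - 1 - s))"
    using sb_weight_mult_Theta[OF assms]
    by (intro sum.cong refl) (simp add: divide_inverse ac_simps)
  finally show ?thesis
    by (simp add: sum_distrib_left sum_divide_distrib)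
qed

theorem propositionA4:
  fixes n r s m :: nat
    and d :: "nat \<Rightarrow> nat"
    and \<mu> :: "nat pmf"
    and f :: "nat list \<Rightarrow> real"
  assumes "r < n" and "s < n"
    and "\<forall>i\<in>{1..r}. 1 \<le> d i"
    and "(\<Sum>i\<in>{1..r}. d i) = s"
    and "integrable (measure_pmf \<mu>) real"
    and "1 \<le> m" and "m \<le> n - r"
    and pos: "measure_pmf.prob (iid_pmf {r+1..n} \<mu>) {x. (\<Sum>i\<in>{r+1..n}. x i) = n - 1 - s} > 0"
  shows "measure_pmf.expectation
           (cond_pmf (iid_pmf {r+1..n} \<mu>) {x. (\<Sum>i\<in>{r+1..n}. x i) = n - 1 - s})
           (\<lambda>x. \<Sum>\<sigma> | \<sigma> permutes {1..n}.
                  sb_prob n (Zvec r d x) \<sigma>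
                  * f (map (\<lambda>i. Zvec r d x (\<sigma> i)) [1..<m+1])
                  * (if m \<le> Npos n r x then 1 else 0)
                  * (if m < tau n r \<sigma> then 1 else 0))
       = infsum (\<lambda>ks. (\<Prod>k\<leftarrow>ks. sb_weight \<mu> k) * f ks * Theta \<mu> n r s ks)
                {ks. length ks = m}"
proof -
  let ?A = "{x. (\<Sum>i\<in>{r+1..n}. x i) = n - 1 - s}"
  let ?q = "cond_pmf (iid_pmf {r+1..n} \<mu>) ?A"
  have "set_pmf (iid_pmf {r+1..n} \<mu>) \<inter> ?A \<noteq> {}"
    using pos by (auto simp: measure_pmf_zero_iff[symmetric])
  then have total: "(\<Sum>i\<in>{1..r}. d i) + (\<Sum>i\<in>{r+1..n}. x i) = n - 1" if "x \<in> set_pmf ?q" for x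
    using that assms(2,4) by auto
  have "measure_pmf.expectation ?q (\<lambda>x. \<Sum>\<sigma> | \<sigma> permutes {1..n}. sb_prob n (Zvec r d x) \<sigma>
          * f (map (\<lambda>i. Zvec r d x (\<sigma> i)) [1..<m+1])
          * (if m \<le> Npos n r x then 1 else 0) * (if m < tau n r \<sigma> then 1 else 0))
      = measure_pmf.expectation ?q
          (\<lambda>x. \<Sum>l\<in>distinct_lists m {r+1..n}. sb_prefix_prob (real (n - 1)) (map x l) * f (map x l))"
    by (intro integral_cong_AE AE_pmfI sum_sb_prob_Zvec[OF assms(1,7)] total) simp_all
  also have "\<dots> = infsum (\<lambda>ks. (\<Prod>k\<leftarrow>ks. sb_weight \<mu> k) * f ks * Theta \<mu> n r s ks) {ks. length ks = m}"
    using expectation_cond_Pi_pmf_sum_distinct_lists[of "{r+1..n}" m \<mu> "n - 1 - s"] pos assms(7)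
    by (simp add: infsum_sb_weight_Theta[OF assms(5,1,7)])
  finally show ?thesis .
qed

end
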